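(* Let $0<h\le1$, let $V$ be smooth periodic, and let $C_{n_1},\dots,C_{n_k}$ be any finite sequence of nested commutators, $C_{n_j}$ of grade $n_j$, of $A=-hD_2$ and $B=\frac1h\mathrm{diag}(V(x_0),\dots,V(x_{N-1}))$ (i.e. $C_{n_j}=[U_{n_j},[\dots,[U_2,U_1]\dots]]$ with each $U_i\in\{A,B\}$). Let $$O=\sum_{m=0}^qO_m,\qquad O_m=Y_mh^mD_m,$$ be a polynomial observable, where $Y_m=\mathrm{diag}(y_m(x_i))$ for smooth periodic $y_m$. Define $W_k=[C_{n_k},[C_{n_{k-1}},\dots,[C_{n_1},O]\dots]]$. Then $\|W_k\|_2\le C$ with a constant $C$ depending on $V$ and its derivatives but independent of $h\in(0,1]$.
   Context: Uniform periodic grid $x_i=a+(b-a)\frac iN$, $i=0,\dots,N-1$, with the number of grid points satisfying $N=O(h^{-1})$. $D_F=N\cdot M$ where $M$ is the $N\times N$ circulant with $-1$ on the diagonal, $1$ on the superdiagonal and $1$ in the bottom-left corner; $D_B=-D_F^\dagger$; $D_2=D_BD_F$; $D_0=I$, $D_k=D_2^{k/2}$ for $k$ even and $D_k=D_FD_2^{(k-1)/2}$ for $k$ odd. $\|\cdot\|_2$ is the spectral norm. *)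

theory Defs
  imports "HOL-Analysis.Analysis" "Jordan_Normal_Form.Matrix"
begin

definition smooth_fun :: "(real \<Rightarrow> real) \<Rightarrow> bool" where
  "smooth_fun f \<longleftrightarrow> (\<forall>k x. ((deriv ^^ k) f) differentiable (at x))"

definition periodic_fun :: "real \<Rightarrow> (real \<Rightarrow> real) \<Rightarrow> bool" where
  "periodic_fun p f \<longleftrightarrow> (\<forall>x. f (x + p) = f x)"

definition grid_pt :: "real \<Rightarrow> real \<Rightarrow> nat \<Rightarrow> nat \<Rightarrow> real" where
  "grid_pt a b N i = a + (b - a) * real i / real N"

(* circulant M: -1 on diagonal, 1 on superdiagonal, 1 in bottom-left corner *)
definition circM :: "nat \<Rightarrow> real mat" where
  "circM N = mat N N (\<lambda>(i,j). (if i = j then -1 else 0) + (if j = Suc i mod N then 1 else 0))"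

definition DF :: "nat \<Rightarrow> real mat" where
  "DF N = real N \<cdot>\<^sub>m circM N"

(* D_B = - D_F^dagger (real matrices: adjoint = transpose) *)
definition DB :: "nat \<Rightarrow> real mat" where
  "DB N = - transpose_mat (DF N)"

definition D2 :: "nat \<Rightarrow> real mat" where
  "D2 N = DB N * DF N"

definition Dk :: "nat \<Rightarrow> nat \<Rightarrow> real mat" where
  "Dk N k = (if even k then D2 N ^\<^sub>m (k div 2) else DF N * (D2 N ^\<^sub>m ((k - 1) div 2)))"

definition grid_diag :: "real \<Rightarrow> real \<Rightarrow> nat \<Rightarrow> (real \<Rightarrow> real) \<Rightarrow> real mat" where
  "grid_diag a b N f = mat_diag N (\<lambda>i. f (grid_pt a b N i))"

definition commutator :: "real mat \<Rightarrow> real mat \<Rightarrow> real mat" where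
  "commutator X Y = X * Y - Y * X"

definition opA :: "nat \<Rightarrow> real \<Rightarrow> real mat" where
  "opA N h = (- h) \<cdot>\<^sub>m D2 N"

definition opB :: "real \<Rightarrow> real \<Rightarrow> nat \<Rightarrow> real \<Rightarrow> (real \<Rightarrow> real) \<Rightarrow> real mat" where
  "opB a b N h V = (1 / h) \<cdot>\<^sub>m grid_diag a b N V"

(* Nested commutator [U_n,[...,[U_2,U_1]...]] of X (=A, True) and Y (=B, False);
   the word is the list [U_n, ..., U_2, U_1], its grade is its length (>= 1). *)
fun nested_comm :: "real mat \<Rightarrow> real mat \<Rightarrow> bool list \<Rightarrow> real mat" where
  "nested_comm X Y [] = X"  (* unused: words are required to be nonempty *)
| "nested_comm X Y [u] = (if u then X else Y)"
| "nested_comm X Y (u # v # us) = commutator (if u then X else Y) (nested_comm X Y (v # us))"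

definition observable :: "real \<Rightarrow> real \<Rightarrow> nat \<Rightarrow> real \<Rightarrow> nat \<Rightarrow> (nat \<Rightarrow> real \<Rightarrow> real) \<Rightarrow> real mat" where
  "observable a b N h q y =
     foldr (\<lambda>m S. S + (h ^ m) \<cdot>\<^sub>m (grid_diag a b N (y m) * Dk N m)) [0..<Suc q] (0\<^sub>m N N)"

(* W_k = [C_k,[C_{k-1},...,[C_1,O]...]] for the list [C_1,...,C_k] *)
definition iter_comm :: "real mat list \<Rightarrow> real mat \<Rightarrow> real mat" where
  "iter_comm Cs Obs = foldl (\<lambda>W C. commutator C W) Obs Cs"

definition vec_norm2 :: "real vec \<Rightarrow> real" where
  "vec_norm2 v = sqrt (\<Sum>i<dim_vec v. (v $ i)\<^sup>2)"

definition spec_norm :: "real mat \<Rightarrow> real" where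
  "spec_norm X = Sup {vec_norm2 (X *\<^sub>v v) | v. v \<in> carrier_vec (dim_col X) \<and> vec_norm2 v \<le> 1}"

end

theory Submission
  imports Defs "HOL-Library.Periodic_Fun" "Jordan_Normal_Form.Determinant"
begin

(* Let op_alg be the algebra of h-dependent N x N matrices generated, over coefficients bounded
   uniformly in h, by the cyclic shift S, its inverse, and the diagonal matrices diag g of grid
   functions g whose k-th differences are O(h^k); sampling a smooth periodic function on the mesh
   (b - a)/N = O(h) gives such a g. Since hN is bounded, h D_F = hN (S - 1) and h D_B lie in op_alg,
   so A and B are h^-1 times elements of op_alg, whereas every term Y_m h^m D_m of the observable
   lies in op_alg. Elements of op_alg have spectral norm bounded uniformly in h, and the commutator
   of two of them is h times another: [S, diag g] = diag (Delta g) S with (Delta g)/h admissible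
   again, and the Leibniz rule carries this over to products. Hence commutators with h^-1 op_alg
   map op_alg into itself, and every W_k stays uniformly bounded. *)

section \<open>Commutators of square matrices\<close>

lemma smult_smult_mat: "a \<cdot>\<^sub>m (b \<cdot>\<^sub>m A) = (a * b) \<cdot>\<^sub>m (A :: 'a :: semigroup_mult mat)"
  by (rule eq_matI) (auto simp: mult.assoc)

lemma one_smult_mat [simp]: "(1 :: 'a :: monoid_mult) \<cdot>\<^sub>m A = A"
  by (rule eq_matI) auto

lemma commutator_antisym:
  assumes "A \<in> carrier_mat n n" "B \<in> carrier_mat n n"
  shows "commutator A B = (-1) \<cdot>\<^sub>m commutator B A"
  unfolding commutator_def using assms by (intro eq_matI) auto

lemma commutator_add_left:
  assumes "A \<in> carrier_mat n n" "B \<in> carrier_mat n n" "C \<in> carrier_mat n n"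
  shows "commutator (A + B) C = commutator A C + commutator B C"
  unfolding commutator_def using assms
  by (simp add: add_mult_distrib_mat mult_add_distrib_mat) (rule eq_matI, auto)

lemma commutator_smult_left:
  assumes "A \<in> carrier_mat n n" "C \<in> carrier_mat n n"
  shows "commutator (c \<cdot>\<^sub>m A) C = c \<cdot>\<^sub>m commutator A C"
  unfolding commutator_def using assms
  by (simp add: mult_smult_distrib mult_smult_assoc_mat) (rule eq_matI, auto simp: algebra_simps)

lemma commutator_smult_right:
  assumes "A \<in> carrier_mat n n" "C \<in> carrier_mat n n"
  shows "commutator A (c \<cdot>\<^sub>m C) = c \<cdot>\<^sub>m commutator A C"
  unfolding commutator_def using assms
  by (simp add: mult_smult_distrib mult_smult_assoc_mat) (rule eq_matI, auto simp: algebra_simps)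

lemma commutator_mult_left:
  assumes A: "A \<in> carrier_mat n n" and B: "B \<in> carrier_mat n n" and C: "C \<in> carrier_mat n n"
  shows "commutator (A * B) C = A * commutator B C + commutator A C * B"
proof -
  have "A * commutator B C + commutator A C * B
      = (A * (B * C) - A * (C * B)) + (A * C * B - C * A * B)"
    unfolding commutator_def using A B C
    by (simp add: mult_minus_distrib_mat[of _ n n _ n] minus_mult_distrib_mat[of _ n n _ _ n])
  also have "\<dots> = A * B * C - C * (A * B)"
    using A B C by (intro eq_matI) auto
  finally show ?thesis unfolding commutator_def by simp
qed

lemma commutator_mat_diag: "commutator (mat_diag n u) (mat_diag n w) = 0\<^sub>m n n"
  unfolding commutator_def by (simp add: mult.commute)

section \<open>Finite differences\<close>

definition fun_diff :: "real \<Rightarrow> (real \<Rightarrow> real) \<Rightarrow> real \<Rightarrow> real" where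
  "fun_diff d f = (\<lambda>x. f (x + d) - f x)"

lemma has_real_derivative_fun_diff:
  assumes "\<And>y. f differentiable (at y)"
  shows "(fun_diff d f has_real_derivative fun_diff d (deriv f) x) (at x)"
proof -
  have f': "(f has_real_derivative deriv f y) (at y)" for y
    using assms DERIV_deriv_iff_real_differentiable by blast
  have "((\<lambda>x. f (x + d)) has_real_derivative deriv f (x + d)) (at x)"
    using f'[of "x + d"] by (simp add: DERIV_shift)
  from DERIV_diff[OF this f'[of x]] show ?thesis
    unfolding fun_diff_def by simp
qed

lemma higher_deriv_fun_diff:
  assumes "smooth_fun f"
  shows "(deriv ^^ k) (fun_diff d f) = fun_diff d ((deriv ^^ k) f)"
proof (induction k)
  case (Suc k)
  have "(deriv ^^ k) f differentiable (at y)" for y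
    using assms unfolding smooth_fun_def by blast
  then have "deriv (fun_diff d ((deriv ^^ k) f)) = fun_diff d (deriv ((deriv ^^ k) f))"
    by (intro ext DERIV_imp_deriv has_real_derivative_fun_diff)
  then show ?case
    using Suc by simp
qed simp

lemma smooth_fun_diff:
  assumes "smooth_fun f"
  shows "smooth_fun (fun_diff d f)"
  unfolding smooth_fun_def higher_deriv_fun_diff[OF assms]
  using assms has_real_derivative_fun_diff real_differentiable_def
  unfolding smooth_fun_def by blast

lemma abs_fun_diff_le:
  assumes "\<And>y. f differentiable (at y)" "\<And>y. \<bar>deriv f y\<bar> \<le> M"
  shows "\<bar>fun_diff d f x\<bar> \<le> M * \<bar>d\<bar>"
  using field_differentiable_bound[of UNIV f "deriv f" M "x + d" x] assms
  by (simp add: fun_diff_def DERIV_deriv_iff_real_differentiable)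

lemma abs_fun_diff_iter_le:
  assumes "smooth_fun f" "\<And>y. \<bar>(deriv ^^ k) f y\<bar> \<le> M"
  shows "\<bar>(fun_diff d ^^ k) f x\<bar> \<le> M * \<bar>d\<bar> ^ k"
  using assms
proof (induction k arbitrary: f M)
  case (Suc k)
  have "(deriv ^^ k) f differentiable (at y)" for y
    using Suc.prems(1) unfolding smooth_fun_def by blast
  then have "\<bar>fun_diff d ((deriv ^^ k) f) y\<bar> \<le> M * \<bar>d\<bar>" for y
    by (rule abs_fun_diff_le) (use Suc.prems(2) in simp)
  then have "\<bar>(fun_diff d ^^ k) (fun_diff d f) x\<bar> \<le> M * \<bar>d\<bar> * \<bar>d\<bar> ^ k"
    by (intro Suc.IH smooth_fun_diff Suc.prems(1)) (simp add: higher_deriv_fun_diff[OF Suc.prems(1)])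
  then show ?case
    by (simp only: funpow_Suc_right o_apply power_Suc mult.assoc)
qed simp

lemma periodic_fun_deriv:
  assumes "periodic_fun p f" "\<And>x. f differentiable (at x)"
  shows "periodic_fun p (deriv f)"
  unfolding periodic_fun_def
proof
  fix x
  have "(f has_real_derivative deriv f (x + p)) (at (x + p))"
    using assms(2) DERIV_deriv_iff_real_differentiable by blast
  then have "((\<lambda>x. f (x + p)) has_real_derivative deriv f (x + p)) (at x)"
    by (simp add: DERIV_shift)
  moreover have "(\<lambda>x. f (x + p)) = f"
    using assms(1) unfolding periodic_fun_def by simp
  ultimately show "deriv f (x + p) = deriv f x"
    by (metis DERIV_imp_deriv)
qed

lemma periodic_fun_higher_deriv:
  assumes "smooth_fun f" "periodic_fun p f"
  shows "periodic_fun p ((deriv ^^ k) f)"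
  by (induction k) (use assms in \<open>auto simp: smooth_fun_def intro: periodic_fun_deriv\<close>)

lemma periodic_fun_bounded:
  assumes "periodic_fun p g" "0 < p" "continuous_on UNIV g"
  shows "\<exists>M. \<forall>x. \<bar>g x\<bar> \<le> M"
proof -
  interpret periodic_fun_simple g p
    using assms(1) by unfold_locales (simp add: periodic_fun_def)
  have "compact (g ` {0..p})"
    by (intro compact_continuous_image continuous_on_subset[OF assms(3)]) auto
  then obtain M where M: "\<forall>y\<in>g ` {0..p}. \<bar>y\<bar> \<le> M"
    using compact_imp_bounded bounded_real by metis
  have "\<bar>g x\<bar> \<le> M" for x
  proof -
    define t where "t = p * frac (x / p)"
    have "t \<in> {0..p}"
      using assms(2) frac_lt_1[of "x / p"] unfolding t_def by auto
    moreover have "g t = g x"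
      using minus_of_int[of x "\<lfloor>x / p\<rfloor>"] assms(2)
      unfolding t_def frac_def by (simp add: algebra_simps)
    ultimately show ?thesis
      using M by (metis imageI)
  qed
  then show ?thesis by blast
qed

lemma smooth_periodic_higher_deriv_bounded:
  assumes "smooth_fun f" "periodic_fun p f" "0 < p"
  shows "\<exists>M. \<forall>x. \<bar>(deriv ^^ k) f x\<bar> \<le> M"
proof (rule periodic_fun_bounded[OF periodic_fun_higher_deriv[OF assms(1,2)] assms(3)])
  have "(deriv ^^ k) f differentiable (at x)" for x
    using assms(1) unfolding smooth_fun_def by blast
  then show "continuous_on UNIV ((deriv ^^ k) f)"
    by (simp add: continuous_at_imp_continuous_on differentiable_imp_continuous_within)
qed

definition seq_diff :: "(nat \<Rightarrow> real) \<Rightarrow> nat \<Rightarrow> real" where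
  "seq_diff u = (\<lambda>i. u (Suc i) - u i)"

lemma seq_diff_iter_divide: "(seq_diff ^^ k) (\<lambda>i. u i / c) = (\<lambda>i. (seq_diff ^^ k) u i / c)"
  by (induction k) (auto simp: seq_diff_def diff_divide_distrib)

lemma seq_diff_iter_sample:
  "(seq_diff ^^ k) (\<lambda>i. f (a + d * real i)) = (\<lambda>i. (fun_diff d ^^ k) f (a + d * real i))"
proof (induction k arbitrary: f)
  case (Suc k)
  have "seq_diff (\<lambda>i. f (a + d * real i)) = (\<lambda>i. fun_diff d f (a + d * real i))"
    by (auto simp: seq_diff_def fun_diff_def algebra_simps)
  then show ?case
    by (simp only: funpow_Suc_right o_apply Suc.IH)
qed simp

lemma periodic_mod_eq:
  fixes u :: "nat \<Rightarrow> 'a"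
  assumes "\<And>i. u (i + n) = u i"
  shows "u (i mod n) = u i"
proof -
  have "u (j + m * n) = u j" for j m
  proof (induction m)
    case (Suc m)
    then show ?case
      using assms[of "j + m * n"] by (simp add: ac_simps)
  qed simp
  then show ?thesis
    by (metis mod_div_mult_eq)
qed

section \<open>Cyclic shifts and operator norm bounds\<close>

definition cyc_shift :: "nat \<Rightarrow> real mat" where
  "cyc_shift n = mat n n (\<lambda>(i, j). if j = Suc i mod n then 1 else 0)"

definition cyc_shift_inv :: "nat \<Rightarrow> real mat" where
  "cyc_shift_inv n = mat n n (\<lambda>(i, j). if i = Suc j mod n then 1 else 0)"

lemma cyc_shift_carrier [simp]:
  "cyc_shift n \<in> carrier_mat n n" "cyc_shift_inv n \<in> carrier_mat n n"
  by (auto simp: cyc_shift_def cyc_shift_inv_def)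

lemma cyc_shift_dim [simp]:
  "dim_row (cyc_shift n) = n" "dim_col (cyc_shift n) = n"
  "dim_row (cyc_shift_inv n) = n" "dim_col (cyc_shift_inv n) = n"
  by (auto simp: cyc_shift_def cyc_shift_inv_def)

lemma Suc_mod_inj: "i < n \<Longrightarrow> j < n \<Longrightarrow> Suc i mod n = Suc j mod n \<Longrightarrow> i = j"
  by (auto simp: mod_Suc split: if_splits)

lemma cyc_shift_mult_inv: "cyc_shift n * cyc_shift_inv n = 1\<^sub>m n"
proof (rule eq_matI)
  fix i j assume ij: "i < dim_row (1\<^sub>m n)" "j < dim_col (1\<^sub>m n)"
  have "(cyc_shift n * cyc_shift_inv n) $$ (i, j)
      = (\<Sum>k = 0..<n. (if k = Suc i mod n then 1 else 0) * (if k = Suc j mod n then 1 else 0))"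
    using ij by (simp add: cyc_shift_def cyc_shift_inv_def scalar_prod_def)
  also have "\<dots> = (\<Sum>k = 0..<n. if k = Suc i mod n then (if Suc i mod n = Suc j mod n then 1 else 0) else 0)"
    by (rule sum.cong) auto
  also have "\<dots> = 1\<^sub>m n $$ (i, j)"
    using ij Suc_mod_inj[of i n j] by (simp add: sum.delta)
  finally show "(cyc_shift n * cyc_shift_inv n) $$ (i, j) = 1\<^sub>m n $$ (i, j)" .
qed auto

lemma cyc_shift_inv_mult: "cyc_shift_inv n * cyc_shift n = 1\<^sub>m n"
  by (rule mat_mult_left_right_inverse[OF _ _ cyc_shift_mult_inv]) auto

lemma cyc_shift_mult_vec:
  assumes "v \<in> carrier_vec n" "i < n"
  shows "(cyc_shift n *\<^sub>v v) $ i = v $ (Suc i mod n)"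
proof -
  have "(cyc_shift n *\<^sub>v v) $ i = (\<Sum>k = 0..<n. (if k = Suc i mod n then 1 else 0) * v $ k)"
    using assms by (simp add: cyc_shift_def scalar_prod_def)
  also have "\<dots> = (\<Sum>k = 0..<n. if k = Suc i mod n then v $ (Suc i mod n) else 0)"
    by (rule sum.cong) auto
  finally show ?thesis using assms by simp
qed

lemma commutator_cyc_shift_mat_diag:
  assumes "\<And>i. u (i + n) = u i"
  shows "commutator (cyc_shift n) (mat_diag n u) = mat_diag n (seq_diff u) * cyc_shift n"
  unfolding commutator_def
  by (simp add: mat_diag_mult_left[OF cyc_shift_carrier(1)] mat_diag_mult_right[OF cyc_shift_carrier(1)])
     (rule eq_matI, auto simp: cyc_shift_def seq_diff_def periodic_mod_eq[of u n, OF assms])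

lemma commutator_cyc_shift_inv_mat_diag:
  assumes "\<And>i. u (i + n) = u i"
  shows "commutator (cyc_shift_inv n) (mat_diag n u) = (-1) \<cdot>\<^sub>m (cyc_shift_inv n * mat_diag n (seq_diff u))"
  unfolding commutator_def
  by (simp add: mat_diag_mult_left[OF cyc_shift_carrier(2)] mat_diag_mult_right[OF cyc_shift_carrier(2)])
     (rule eq_matI, auto simp: cyc_shift_inv_def seq_diff_def periodic_mod_eq[of u n, OF assms])

lemma vec_norm2_eq_L2_set: "vec_norm2 v = L2_set (\<lambda>i. v $ i) {..<dim_vec v}"
  unfolding vec_norm2_def L2_set_def by simp

lemma vec_norm2_nonneg: "0 \<le> vec_norm2 v"
  unfolding vec_norm2_def by (simp add: sum_nonneg)

lemma vec_norm2_triangle: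
  assumes "v \<in> carrier_vec n" "w \<in> carrier_vec n"
  shows "vec_norm2 (v + w) \<le> vec_norm2 v + vec_norm2 w"
proof -
  have "vec_norm2 (v + w) = L2_set (\<lambda>i. v $ i + w $ i) {..<n}"
    unfolding vec_norm2_eq_L2_set using assms by (intro L2_set_cong) auto
  also have "\<dots> \<le> L2_set (\<lambda>i. v $ i) {..<n} + L2_set (\<lambda>i. w $ i) {..<n}"
    by (rule L2_set_triangle_ineq)
  finally show ?thesis unfolding vec_norm2_eq_L2_set using assms by simp
qed

lemma vec_norm2_smult: "vec_norm2 (c \<cdot>\<^sub>v v) = \<bar>c\<bar> * vec_norm2 v"
proof -
  have "vec_norm2 (c \<cdot>\<^sub>v v) = sqrt (c\<^sup>2 * (\<Sum>i<dim_vec v. (v $ i)\<^sup>2))"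
    unfolding vec_norm2_def by (simp add: sum_distrib_left power_mult_distrib)
  then show ?thesis unfolding vec_norm2_def by (simp add: real_sqrt_mult)
qed

lemma vec_norm2_le_pointwise:
  assumes "dim_vec w = dim_vec v" "\<And>i. i < dim_vec v \<Longrightarrow> \<bar>w $ i\<bar> \<le> M * \<bar>v $ i\<bar>" "0 \<le> M"
  shows "vec_norm2 w \<le> M * vec_norm2 v"
proof -
  have "(w $ i)\<^sup>2 \<le> M\<^sup>2 * (v $ i)\<^sup>2" if "i < dim_vec v" for i
    using assms(2)[OF that] assms(3)
    by (metis abs_ge_zero abs_mult abs_of_nonneg abs_le_square_iff power_mult_distrib)
  then have "(\<Sum>i<dim_vec w. (w $ i)\<^sup>2) \<le> M\<^sup>2 * (\<Sum>i<dim_vec v. (v $ i)\<^sup>2)"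
    using assms(1) by (auto simp: sum_distrib_left intro: sum_mono)
  then show ?thesis
    unfolding vec_norm2_def using assms(3) by (metis real_sqrt_le_mono real_sqrt_mult real_sqrt_abs abs_of_nonneg)
qed

lemma vec_norm2_cyc_shift:
  assumes "v \<in> carrier_vec n"
  shows "vec_norm2 (cyc_shift n *\<^sub>v v) = vec_norm2 v"
proof -
  have "inj_on (\<lambda>i. Suc i mod n) {..<n}"
    by (auto simp: inj_on_def Suc_mod_inj)
  moreover have "(\<lambda>i. Suc i mod n) ` {..<n} \<subseteq> {..<n}"
    by auto
  ultimately have "bij_betw (\<lambda>i. Suc i mod n) {..<n} {..<n}"
    by (simp add: bij_betw_def endo_inj_surj)
  then have "(\<Sum>i<n. (v $ (Suc i mod n))\<^sup>2) = (\<Sum>i<n. (v $ i)\<^sup>2)"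
    by (rule sum.reindex_bij_betw)
  moreover have "(\<Sum>i<n. ((cyc_shift n *\<^sub>v v) $ i)\<^sup>2) = (\<Sum>i<n. (v $ (Suc i mod n))\<^sup>2)"
    using assms by (intro sum.cong) (auto simp del: index_mult_mat_vec simp: cyc_shift_mult_vec)
  ultimately show ?thesis unfolding vec_norm2_def using assms by simp
qed

lemma vec_norm2_cyc_shift_inv:
  assumes "v \<in> carrier_vec n"
  shows "vec_norm2 (cyc_shift_inv n *\<^sub>v v) = vec_norm2 v"
proof -
  have "cyc_shift n *\<^sub>v (cyc_shift_inv n *\<^sub>v v) = v"
    using assms by (simp add: assoc_mult_mat_vec[symmetric, of _ n n _ n] cyc_shift_mult_inv)
  moreover have "cyc_shift_inv n *\<^sub>v v \<in> carrier_vec n"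
    by (rule mult_mat_vec_carrier[OF cyc_shift_carrier(2) assms])
  ultimately show ?thesis
    using vec_norm2_cyc_shift by metis
qed

definition mat_bounded_by :: "real mat \<Rightarrow> real \<Rightarrow> bool" where
  "mat_bounded_by X M \<longleftrightarrow>
     (\<forall>v\<in>carrier_vec (dim_col X). vec_norm2 (X *\<^sub>v v) \<le> M * vec_norm2 v)"

lemma mat_bounded_by_add:
  assumes "X \<in> carrier_mat n n" "Y \<in> carrier_mat n n"
    and "mat_bounded_by X M" "mat_bounded_by Y M'"
  shows "mat_bounded_by (X + Y) (M + M')"
  unfolding mat_bounded_by_def
proof
  fix v :: "real vec" assume v: "v \<in> carrier_vec (dim_col (X + Y))"
  then have v': "v \<in> carrier_vec n" using assms(1,2) by simp
  have "vec_norm2 ((X + Y) *\<^sub>v v) = vec_norm2 (X *\<^sub>v v + Y *\<^sub>v v)"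
    using assms(1,2) v' by (simp add: add_mult_distrib_mat_vec)
  also have "\<dots> \<le> vec_norm2 (X *\<^sub>v v) + vec_norm2 (Y *\<^sub>v v)"
    using assms(1,2) v' by (intro vec_norm2_triangle[of _ n]) auto
  also have "\<dots> \<le> M * vec_norm2 v + M' * vec_norm2 v"
    using assms v' unfolding mat_bounded_by_def by (intro add_mono) auto
  finally show "vec_norm2 ((X + Y) *\<^sub>v v) \<le> (M + M') * vec_norm2 v"
    by (simp add: algebra_simps)
qed

lemma mat_bounded_by_mult:
  assumes "X \<in> carrier_mat n n" "Y \<in> carrier_mat n n" "0 \<le> M"
    and "mat_bounded_by X M" "mat_bounded_by Y M'"
  shows "mat_bounded_by (X * Y) (M * M')"
  unfolding mat_bounded_by_def
proof
  fix v :: "real vec" assume v: "v \<in> carrier_vec (dim_col (X * Y))"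
  then have v': "v \<in> carrier_vec n" using assms(2) by simp
  have "vec_norm2 ((X * Y) *\<^sub>v v) = vec_norm2 (X *\<^sub>v (Y *\<^sub>v v))"
    using assms(1,2) v' by (simp add: assoc_mult_mat_vec)
  also have "\<dots> \<le> M * vec_norm2 (Y *\<^sub>v v)"
    using assms(1,2,4) v' unfolding mat_bounded_by_def by simp
  also have "\<dots> \<le> M * (M' * vec_norm2 v)"
    using assms(2,3,5) v' unfolding mat_bounded_by_def by (intro mult_left_mono) auto
  finally show "vec_norm2 ((X * Y) *\<^sub>v v) \<le> M * M' * vec_norm2 v"
    by (simp add: algebra_simps)
qed

lemma mat_bounded_by_smult:
  assumes "mat_bounded_by X M" "\<bar>c\<bar> \<le> C" "0 \<le> M"
  shows "mat_bounded_by (c \<cdot>\<^sub>m X) (C * M)"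
  unfolding mat_bounded_by_def
proof
  fix v :: "real vec" assume v: "v \<in> carrier_vec (dim_col (c \<cdot>\<^sub>m X))"
  have "(c \<cdot>\<^sub>m X) *\<^sub>v v = c \<cdot>\<^sub>v (X *\<^sub>v v)"
    using v by (intro eq_vecI) (auto simp: scalar_prod_def sum_distrib_left mult.assoc)
  then have "vec_norm2 ((c \<cdot>\<^sub>m X) *\<^sub>v v) = \<bar>c\<bar> * vec_norm2 (X *\<^sub>v v)"
    by (simp add: vec_norm2_smult)
  also have "\<dots> \<le> C * (M * vec_norm2 v)"
    using assms v unfolding mat_bounded_by_def
    by (intro mult_mono) (auto simp: vec_norm2_nonneg)
  finally show "vec_norm2 ((c \<cdot>\<^sub>m X) *\<^sub>v v) \<le> C * M * vec_norm2 v"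
    by (simp add: algebra_simps)
qed

lemma dim_mat_diag [simp]: "dim_row (mat_diag n u) = n" "dim_col (mat_diag n u) = n"
  by (simp_all add: mat_diag_def)

lemma mat_diag_mult_vec:
  assumes "v \<in> carrier_vec n" "i < n"
  shows "(mat_diag n u *\<^sub>v v) $ i = u i * v $ i"
proof -
  have "(mat_diag n u *\<^sub>v v) $ i = (\<Sum>k = 0..<n. (if i = k then u k else 0) * v $ k)"
    using assms by (simp add: mat_diag_def scalar_prod_def)
  also have "\<dots> = (\<Sum>k = 0..<n. if k = i then u i * v $ i else 0)"
    by (rule sum.cong) auto
  finally show ?thesis using assms by simp
qed

lemma mat_bounded_by_mat_diag:
  assumes "\<And>i. i < n \<Longrightarrow> \<bar>u i\<bar> \<le> M" "0 \<le> M"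
  shows "mat_bounded_by (mat_diag n u) M"
  unfolding mat_bounded_by_def
proof
  fix v :: "real vec" assume "v \<in> carrier_vec (dim_col (mat_diag n u))"
  then have v: "v \<in> carrier_vec n" by simp
  show "vec_norm2 (mat_diag n u *\<^sub>v v) \<le> M * vec_norm2 v"
  proof (rule vec_norm2_le_pointwise)
    fix i assume "i < dim_vec v"
    then have i: "i < n" using v by simp
    have "\<bar>(mat_diag n u *\<^sub>v v) $ i\<bar> = \<bar>u i\<bar> * \<bar>v $ i\<bar>"
      by (simp only: mat_diag_mult_vec[OF v i] abs_mult)
    also have "\<dots> \<le> M * \<bar>v $ i\<bar>"
      using assms(1)[OF i] by (rule mult_right_mono) simp
    finally show "\<bar>(mat_diag n u *\<^sub>v v) $ i\<bar> \<le> M * \<bar>v $ i\<bar>" .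
  qed (use v assms(2) in simp_all)
qed

lemma mat_bounded_by_cyc_shift:
  "mat_bounded_by (cyc_shift n) 1" "mat_bounded_by (cyc_shift_inv n) 1"
  unfolding mat_bounded_by_def by (simp_all add: vec_norm2_cyc_shift vec_norm2_cyc_shift_inv)

lemma spec_norm_le_if_mat_bounded_by:
  assumes "mat_bounded_by X M" "0 \<le> M"
  shows "spec_norm X \<le> M"
  unfolding spec_norm_def
proof (rule cSup_least)
  have "vec_norm2 (0\<^sub>v (dim_col X)) \<le> 1"
    by (simp add: vec_norm2_def)
  then show "{vec_norm2 (X *\<^sub>v v) |v. v \<in> carrier_vec (dim_col X) \<and> vec_norm2 v \<le> 1} \<noteq> {}"
    by (auto intro!: exI[where x = "0\<^sub>v (dim_col X)"])
next
  fix x assume "x \<in> {vec_norm2 (X *\<^sub>v v) |v. v \<in> carrier_vec (dim_col X) \<and> vec_norm2 v \<le> 1}"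
  then obtain v where v: "x = vec_norm2 (X *\<^sub>v v)" "v \<in> carrier_vec (dim_col X)" "vec_norm2 v \<le> 1"
    by auto
  then have "x \<le> M * vec_norm2 v"
    using assms(1) unfolding mat_bounded_by_def by blast
  also have "\<dots> \<le> M"
    using assms(2) v(3) by (simp add: mult_left_le)
  finally show "x \<le> M" .
qed

section \<open>The algebra of grid operators\<close>

definition bdd_on_unit :: "(real \<Rightarrow> real) \<Rightarrow> bool" where
  "bdd_on_unit c \<longleftrightarrow> (\<exists>M. \<forall>h\<in>{0<..1}. \<bar>c h\<bar> \<le> M)"

lemma bdd_on_unit_const [simp]: "bdd_on_unit (\<lambda>_. c)"
  unfolding bdd_on_unit_def by blast

locale grid =
  fixes Ng :: "real \<Rightarrow> nat"
begin

definition smooth_grid_funs :: "(real \<Rightarrow> nat \<Rightarrow> real) set" where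
  "smooth_grid_funs = {g. (\<forall>h\<in>{0<..1}. \<forall>i. g h (i + Ng h) = g h i) \<and>
     (\<forall>k. \<exists>M. \<forall>h\<in>{0<..1}. \<forall>i. \<bar>(seq_diff ^^ k) (g h) i\<bar> \<le> M * h ^ k)}"

lemma smooth_grid_funs_periodic:
  "g \<in> smooth_grid_funs \<Longrightarrow> h \<in> {0<..1} \<Longrightarrow> g h (i + Ng h) = g h i"
  unfolding smooth_grid_funs_def by blast

lemma smooth_grid_funs_bounded:
  assumes "g \<in> smooth_grid_funs"
  shows "\<exists>M. \<forall>h\<in>{0<..1}. \<forall>i. \<bar>g h i\<bar> \<le> M"
proof -
  from assms obtain M where "\<forall>h\<in>{0<..1}. \<forall>i. \<bar>(seq_diff ^^ 0) (g h) i\<bar> \<le> M * h ^ 0"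
    unfolding smooth_grid_funs_def by blast
  then show ?thesis
    by auto
qed

lemma smooth_grid_funs_diff_quotient:
  assumes "g \<in> smooth_grid_funs"
  shows "(\<lambda>h i. seq_diff (g h) i / h) \<in> smooth_grid_funs"
proof -
  have "\<exists>M. \<forall>h\<in>{0<..1}. \<forall>i. \<bar>(seq_diff ^^ k) (\<lambda>i. seq_diff (g h) i / h) i\<bar> \<le> M * h ^ k" for k
  proof -
    obtain M where M: "\<forall>h\<in>{0<..1}. \<forall>i. \<bar>(seq_diff ^^ Suc k) (g h) i\<bar> \<le> M * h ^ Suc k"
      using assms unfolding smooth_grid_funs_def by blast
    have "\<bar>(seq_diff ^^ k) (\<lambda>i. seq_diff (g h) i / h) i\<bar> \<le> M * h ^ k" if h: "h \<in> {0<..1}" for h i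
    proof -
      have "(seq_diff ^^ k) (\<lambda>i. seq_diff (g h) i / h) i = (seq_diff ^^ Suc k) (g h) i / h"
        by (simp only: seq_diff_iter_divide funpow_Suc_right o_apply)
      also have "\<bar>\<dots>\<bar> = \<bar>(seq_diff ^^ Suc k) (g h) i\<bar> / h"
        using h by (simp add: abs_divide del: funpow.simps)
      also have "\<dots> \<le> M * h ^ Suc k / h"
        using M h by (intro divide_right_mono) auto
      also have "\<dots> = M * h ^ k"
        using h by simp
      finally show ?thesis .
    qed
    then show ?thesis by blast
  qed
  moreover have "seq_diff (g h) (i + Ng h) = seq_diff (g h) i" if "h \<in> {0<..1}" for h i
    using smooth_grid_funs_periodic[OF assms that] unfolding seq_diff_def by (metis add_Suc)
  ultimately show ?thesis
    unfolding smooth_grid_funs_def by simp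
qed

inductive_set op_alg :: "(real \<Rightarrow> real mat) set" where
  diag: "g \<in> smooth_grid_funs \<Longrightarrow> (\<lambda>h. mat_diag (Ng h) (g h)) \<in> op_alg"
| shift: "(\<lambda>h. cyc_shift (Ng h)) \<in> op_alg"
| shift_inv: "(\<lambda>h. cyc_shift_inv (Ng h)) \<in> op_alg"
| smult: "bdd_on_unit c \<Longrightarrow> F \<in> op_alg \<Longrightarrow> (\<lambda>h. c h \<cdot>\<^sub>m F h) \<in> op_alg"
| add: "F \<in> op_alg \<Longrightarrow> K \<in> op_alg \<Longrightarrow> (\<lambda>h. F h + K h) \<in> op_alg"
| mult: "F \<in> op_alg \<Longrightarrow> K \<in> op_alg \<Longrightarrow> (\<lambda>h. F h * K h) \<in> op_alg"

lemma op_alg_carrier: "F \<in> op_alg \<Longrightarrow> F h \<in> carrier_mat (Ng h) (Ng h)"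
  by (induction rule: op_alg.induct) auto

lemma op_alg_one: "(\<lambda>h. 1\<^sub>m (Ng h)) \<in> op_alg"
  using op_alg.mult[OF op_alg.shift op_alg.shift_inv] by (simp add: cyc_shift_mult_inv)

lemma op_alg_bounded:
  assumes "F \<in> op_alg"
  shows "\<exists>M\<ge>0. \<forall>h\<in>{0<..1}. mat_bounded_by (F h) M"
  using assms
proof (induction rule: op_alg.induct)
  case (diag g)
  then obtain M where "\<forall>h\<in>{0<..1}. \<forall>i. \<bar>g h i\<bar> \<le> M"
    using smooth_grid_funs_bounded by blast
  then have "\<forall>h\<in>{0<..1}. mat_bounded_by (mat_diag (Ng h) (g h)) (max M 0)"
    by (auto intro: mat_bounded_by_mat_diag le_max_iff_disj[THEN iffD2])
  then show ?case by (intro exI[of _ "max M 0"]) simp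
next
  case shift
  show ?case using mat_bounded_by_cyc_shift(1) by (intro exI[of _ 1]) simp
next
  case shift_inv
  show ?case using mat_bounded_by_cyc_shift(2) by (intro exI[of _ 1]) simp
next
  case (smult c F)
  obtain C where C: "\<And>h. h \<in> {0<..1} \<Longrightarrow> \<bar>c h\<bar> \<le> max C 0"
    using smult.hyps(1) unfolding bdd_on_unit_def by (meson le_max_iff_disj)
  obtain M where "0 \<le> M" "\<forall>h\<in>{0<..1}. mat_bounded_by (F h) M"
    using smult.IH by blast
  then show ?case
    using C by (intro exI[of _ "max C 0 * M"]) (simp add: mat_bounded_by_smult)
next
  case (add F K)
  obtain M M' where "0 \<le> M" "\<forall>h\<in>{0<..1}. mat_bounded_by (F h) M"
    and "0 \<le> M'" "\<forall>h\<in>{0<..1}. mat_bounded_by (K h) M'"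
    using add.IH by blast
  then show ?case
    using op_alg_carrier[OF add.hyps(1)] op_alg_carrier[OF add.hyps(2)]
    by (intro exI[of _ "M + M'"]) (auto intro!: mat_bounded_by_add)
next
  case (mult F K)
  obtain M M' where "0 \<le> M" "\<forall>h\<in>{0<..1}. mat_bounded_by (F h) M"
    and "0 \<le> M'" "\<forall>h\<in>{0<..1}. mat_bounded_by (K h) M'"
    using mult.IH by blast
  then show ?case
    using op_alg_carrier[OF mult.hyps(1)] op_alg_carrier[OF mult.hyps(2)]
    by (intro exI[of _ "M * M'"]) (auto intro!: mat_bounded_by_mult)
qed

definition alg_generator :: "(real \<Rightarrow> real mat) \<Rightarrow> bool" where
  "alg_generator G \<longleftrightarrow> (\<exists>g\<in>smooth_grid_funs. G = (\<lambda>h. mat_diag (Ng h) (g h))) \<or>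
     G = (\<lambda>h. cyc_shift (Ng h)) \<or> G = (\<lambda>h. cyc_shift_inv (Ng h))"

lemma op_alg_generator: "alg_generator G \<Longrightarrow> G \<in> op_alg"
  unfolding alg_generator_def by (auto intro: op_alg.intros)

definition scaled_alg :: "int \<Rightarrow> (real \<Rightarrow> real mat) \<Rightarrow> bool" where
  "scaled_alg e P \<longleftrightarrow> (\<exists>R\<in>op_alg. \<forall>h\<in>{0<..1}. P h = h powi e \<cdot>\<^sub>m R h)"

lemma scaled_alg_cong:
  assumes "scaled_alg e Q" "\<And>h. h \<in> {0<..1} \<Longrightarrow> P h = Q h"
  shows "scaled_alg e P"
  using assms unfolding scaled_alg_def by auto

lemma scaled_alg_carrier:
  assumes "scaled_alg e P" "h \<in> {0<..1}"
  shows "P h \<in> carrier_mat (Ng h) (Ng h)"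
proof -
  obtain R where "R \<in> op_alg" "P h = h powi e \<cdot>\<^sub>m R h"
    using assms unfolding scaled_alg_def by blast
  then show ?thesis
    using op_alg_carrier[of R h] by simp
qed

lemma scaled_alg_op_alg: "R \<in> op_alg \<Longrightarrow> scaled_alg 0 R"
  unfolding scaled_alg_def by auto

lemma scaled_alg_zero: "scaled_alg e (\<lambda>h. 0\<^sub>m (Ng h) (Ng h))"
  unfolding scaled_alg_def
proof (intro bexI ballI)
  show "(\<lambda>h. 0 \<cdot>\<^sub>m cyc_shift (Ng h)) \<in> op_alg"
    by (intro op_alg.smult op_alg.shift) simp
qed (intro eq_matI, auto)

lemma scaled_alg_smult:
  assumes "bdd_on_unit c" "scaled_alg e P"
  shows "scaled_alg e (\<lambda>h. c h \<cdot>\<^sub>m P h)"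
proof -
  obtain R where "R \<in> op_alg" "\<forall>h\<in>{0<..1}. P h = h powi e \<cdot>\<^sub>m R h"
    using assms(2) unfolding scaled_alg_def by blast
  then show ?thesis
    unfolding scaled_alg_def using assms(1)
    by (intro bexI[of _ "\<lambda>h. c h \<cdot>\<^sub>m R h"]) (auto simp: smult_smult_mat mult.commute intro: op_alg.smult)
qed

lemma scaled_alg_smult_powi:
  assumes "scaled_alg e P"
  shows "scaled_alg (e + d) (\<lambda>h. h powi d \<cdot>\<^sub>m P h)"
proof -
  obtain R where "R \<in> op_alg" "\<forall>h\<in>{0<..1}. P h = h powi e \<cdot>\<^sub>m R h"
    using assms unfolding scaled_alg_def by blast
  then show ?thesis
    unfolding scaled_alg_def by (auto simp: smult_smult_mat power_int_add mult.commute)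
qed

lemma scaled_alg_add:
  assumes "scaled_alg e P" "scaled_alg e Q"
  shows "scaled_alg e (\<lambda>h. P h + Q h)"
proof -
  obtain R R' where R: "R \<in> op_alg" "\<forall>h\<in>{0<..1}. P h = h powi e \<cdot>\<^sub>m R h"
    and R': "R' \<in> op_alg" "\<forall>h\<in>{0<..1}. Q h = h powi e \<cdot>\<^sub>m R' h"
    using assms unfolding scaled_alg_def by blast
  show ?thesis
    unfolding scaled_alg_def
  proof (intro bexI ballI)
    fix h :: real assume "h \<in> {0<..1}"
    then show "P h + Q h = h powi e \<cdot>\<^sub>m (R h + R' h)"
      using R R' op_alg_carrier[OF R(1), of h] op_alg_carrier[OF R'(1), of h]
      by (simp add: add_smult_distrib_left_mat[of _ "Ng h" "Ng h"])
  qed (rule op_alg.add[OF R(1) R'(1)])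
qed

lemma scaled_alg_mult:
  assumes "scaled_alg e P" "scaled_alg e' Q"
  shows "scaled_alg (e + e') (\<lambda>h. P h * Q h)"
proof -
  obtain R R' where R: "R \<in> op_alg" "\<forall>h\<in>{0<..1}. P h = h powi e \<cdot>\<^sub>m R h"
    and R': "R' \<in> op_alg" "\<forall>h\<in>{0<..1}. Q h = h powi e' \<cdot>\<^sub>m R' h"
    using assms unfolding scaled_alg_def by blast
  show ?thesis
    unfolding scaled_alg_def
  proof (intro bexI ballI)
    fix h :: real assume "h \<in> {0<..1}"
    then show "P h * Q h = h powi (e + e') \<cdot>\<^sub>m (R h * R' h)"
      using R R' op_alg_carrier[OF R(1), of h] op_alg_carrier[OF R'(1), of h]
      by (simp add: mult_smult_assoc_mat[of _ "Ng h" "Ng h"] mult_smult_distrib[of _ "Ng h" "Ng h"]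
          smult_smult_mat power_int_add mult.commute)
  qed (rule op_alg.mult[OF R(1) R'(1)])
qed

lemma scaled_alg_power:
  assumes "scaled_alg e P"
  shows "scaled_alg (int k * e) (\<lambda>h. P h ^\<^sub>m k)"
proof (induction k)
  case 0
  have "dim_row (P h) = Ng h" if "h \<in> {0<..1}" for h
    using scaled_alg_carrier[OF assms that] by simp
  then show ?case
    by (auto intro: scaled_alg_cong[OF scaled_alg_op_alg[OF op_alg_one]])
next
  case (Suc k)
  then show ?case
    using scaled_alg_mult[OF Suc assms] by (simp add: algebra_simps)
qed

lemma scaled_alg_bounded:
  assumes "scaled_alg 0 P"
  shows "\<exists>C. \<forall>h\<in>{0<..1}. spec_norm (P h) \<le> C"
proof -
  obtain R where R: "R \<in> op_alg" "\<forall>h\<in>{0<..1}. P h = R h"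
    using assms unfolding scaled_alg_def by auto
  obtain M where "0 \<le> M" "\<forall>h\<in>{0<..1}. mat_bounded_by (R h) M"
    using op_alg_bounded[OF R(1)] by blast
  then show ?thesis
    using R(2) by (intro exI[of _ M]) (simp add: spec_norm_le_if_mat_bounded_by)
qed

lemma scaled_alg_mat_diag_seq_diff:
  assumes "g \<in> smooth_grid_funs"
  shows "scaled_alg 1 (\<lambda>h. mat_diag (Ng h) (seq_diff (g h)))"
  unfolding scaled_alg_def
proof (intro bexI ballI)
  show "(\<lambda>h. mat_diag (Ng h) (\<lambda>i. seq_diff (g h) i / h)) \<in> op_alg"
    using op_alg.diag[OF smooth_grid_funs_diff_quotient[OF assms]] .
  fix h :: real assume "h \<in> {0<..1}"
  then show "mat_diag (Ng h) (seq_diff (g h)) = h powi 1 \<cdot>\<^sub>m mat_diag (Ng h) (\<lambda>i. seq_diff (g h) i / h)"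
    by (intro eq_matI) (auto simp: mat_diag_def)
qed

lemma scaled_alg_commutator_mat_diag:
  assumes "alg_generator G" "g \<in> smooth_grid_funs"
  shows "scaled_alg 1 (\<lambda>h. commutator (G h) (mat_diag (Ng h) (g h)))"
proof -
  have per: "\<And>h i. h \<in> {0<..1} \<Longrightarrow> g h (i + Ng h) = g h i"
    using smooth_grid_funs_periodic[OF assms(2)] .
  note diff = scaled_alg_mat_diag_seq_diff[OF assms(2)]
  from assms(1) consider (diag) g' where "G = (\<lambda>h. mat_diag (Ng h) (g' h))"
    | (shift) "G = (\<lambda>h. cyc_shift (Ng h))" | (shift_inv) "G = (\<lambda>h. cyc_shift_inv (Ng h))"
    unfolding alg_generator_def by blast
  then show ?thesis
  proof cases
    case diag
    then show ?thesis
      using scaled_alg_zero by (simp add: commutator_mat_diag)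
  next
    case shift
    have "scaled_alg 1 (\<lambda>h. mat_diag (Ng h) (seq_diff (g h)) * cyc_shift (Ng h))"
      using scaled_alg_mult[OF diff scaled_alg_op_alg[OF op_alg.shift]] by simp
    then show ?thesis
      by (rule scaled_alg_cong) (simp add: shift commutator_cyc_shift_mat_diag per)
  next
    case shift_inv
    have "scaled_alg 1 (\<lambda>h. cyc_shift_inv (Ng h) * mat_diag (Ng h) (seq_diff (g h)))"
      using scaled_alg_mult[OF scaled_alg_op_alg[OF op_alg.shift_inv] diff] by simp
    then have "scaled_alg 1 (\<lambda>h. (-1) \<cdot>\<^sub>m (cyc_shift_inv (Ng h) * mat_diag (Ng h) (seq_diff (g h))))"
      by (rule scaled_alg_smult[rotated]) simp
    then show ?thesis
      by (rule scaled_alg_cong) (simp add: shift_inv commutator_cyc_shift_inv_mat_diag per)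
  qed
qed

lemma scaled_alg_commutator_swap:
  assumes "F \<in> op_alg" "K \<in> op_alg" "scaled_alg e (\<lambda>h. commutator (F h) (K h))"
  shows "scaled_alg e (\<lambda>h. commutator (K h) (F h))"
proof (rule scaled_alg_cong)
  show "scaled_alg e (\<lambda>h. (-1) \<cdot>\<^sub>m commutator (F h) (K h))"
    using assms(3) by (rule scaled_alg_smult[rotated]) simp
  show "commutator (K h) (F h) = (-1) \<cdot>\<^sub>m commutator (F h) (K h)" for h
    using op_alg_carrier[OF assms(2)] op_alg_carrier[OF assms(1)] by (rule commutator_antisym)
qed

lemma scaled_alg_commutator_generators:
  assumes "alg_generator F" "alg_generator G"
  shows "scaled_alg 1 (\<lambda>h. commutator (F h) (G h))"
proof -
  consider (diag_right) g where "g \<in> smooth_grid_funs" "G = (\<lambda>h. mat_diag (Ng h) (g h))"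
    | (diag_left) g where "g \<in> smooth_grid_funs" "F = (\<lambda>h. mat_diag (Ng h) (g h))"
    | (shifts) "F \<in> {\<lambda>h. cyc_shift (Ng h), \<lambda>h. cyc_shift_inv (Ng h)}"
        "G \<in> {\<lambda>h. cyc_shift (Ng h), \<lambda>h. cyc_shift_inv (Ng h)}"
    using assms unfolding alg_generator_def by blast
  then show ?thesis
  proof cases
    case diag_right
    then show ?thesis
      using scaled_alg_commutator_mat_diag[OF assms(1)] by simp
  next
    case diag_left
    then have "scaled_alg 1 (\<lambda>h. commutator (G h) (F h))"
      using scaled_alg_commutator_mat_diag[OF assms(2)] by simp
    then show ?thesis
      using scaled_alg_commutator_swap op_alg_generator assms by blast
  next
    case shifts
    then have "commutator (F h) (G h) = 0\<^sub>m (Ng h) (Ng h)" for h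
      by (auto simp: commutator_def cyc_shift_mult_inv cyc_shift_inv_mult)
    then show ?thesis
      using scaled_alg_zero by simp
  qed
qed

lemma scaled_alg_commutator_closed_left:
  assumes "K \<in> op_alg" "\<And>G. alg_generator G \<Longrightarrow> scaled_alg 1 (\<lambda>h. commutator (G h) (K h))"
    and "F \<in> op_alg"
  shows "scaled_alg 1 (\<lambda>h. commutator (F h) (K h))"
  using assms(3)
proof (induction rule: op_alg.induct)
  case (diag g)
  then show ?case
    by (intro assms(2)) (auto simp: alg_generator_def)
next
  case shift
  then show ?case
    by (intro assms(2)) (simp add: alg_generator_def)
next
  case shift_inv
  then show ?case
    by (intro assms(2)) (simp add: alg_generator_def)
next
  case (smult c F)
  have "scaled_alg 1 (\<lambda>h. c h \<cdot>\<^sub>m commutator (F h) (K h))"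
    using smult.hyps(1) smult.IH by (rule scaled_alg_smult)
  then show ?case
    by (rule scaled_alg_cong)
       (simp add: commutator_smult_left[OF op_alg_carrier[OF smult.hyps(2)] op_alg_carrier[OF assms(1)]])
next
  case (add F1 F2)
  have "scaled_alg 1 (\<lambda>h. commutator (F1 h) (K h) + commutator (F2 h) (K h))"
    using add.IH by (rule scaled_alg_add)
  then show ?case
    by (rule scaled_alg_cong)
       (simp add: commutator_add_left[OF op_alg_carrier[OF add.hyps(1)] op_alg_carrier[OF add.hyps(2)]
          op_alg_carrier[OF assms(1)]])
next
  case (mult F1 F2)
  have "scaled_alg (0 + 1) (\<lambda>h. F1 h * commutator (F2 h) (K h))"
    using scaled_alg_op_alg[OF mult.hyps(1)] mult.IH(2) by (rule scaled_alg_mult)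
  moreover have "scaled_alg (1 + 0) (\<lambda>h. commutator (F1 h) (K h) * F2 h)"
    using mult.IH(1) scaled_alg_op_alg[OF mult.hyps(2)] by (rule scaled_alg_mult)
  ultimately have "scaled_alg 1 (\<lambda>h. F1 h * commutator (F2 h) (K h) + commutator (F1 h) (K h) * F2 h)"
    by (simp add: scaled_alg_add)
  then show ?case
    by (rule scaled_alg_cong)
       (simp add: commutator_mult_left[OF op_alg_carrier[OF mult.hyps(1)] op_alg_carrier[OF mult.hyps(2)]
          op_alg_carrier[OF assms(1)]])
qed

lemma op_alg_commutator:
  assumes "F \<in> op_alg" "K \<in> op_alg"
  shows "scaled_alg 1 (\<lambda>h. commutator (F h) (K h))"
proof -
  \<comment> \<open>Induct on the left factor twice: first with a generator on the right, then, after
    swapping, with an arbitrary right factor.\<close>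
  have with_generator: "scaled_alg 1 (\<lambda>h. commutator (F' h) (G h))"
    if "F' \<in> op_alg" "alg_generator G" for F' G
    using op_alg_generator[OF that(2)] scaled_alg_commutator_generators[OF _ that(2)] that(1)
    by (rule scaled_alg_commutator_closed_left)
  have "scaled_alg 1 (\<lambda>h. commutator (K h) (F h))"
    using assms(1) _ assms(2)
  proof (rule scaled_alg_commutator_closed_left)
    fix G assume "alg_generator G"
    then show "scaled_alg 1 (\<lambda>h. commutator (G h) (F h))"
      using scaled_alg_commutator_swap[OF assms(1) op_alg_generator] with_generator[OF assms(1)] by blast
  qed
  then show ?thesis
    by (rule scaled_alg_commutator_swap[OF assms(2,1)])
qed

lemma scaled_alg_commutator:
  assumes "scaled_alg e P" "scaled_alg e' Q"
  shows "scaled_alg (e + e' + 1) (\<lambda>h. commutator (P h) (Q h))"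
proof -
  obtain R R' where R: "R \<in> op_alg" "\<forall>h\<in>{0<..1}. P h = h powi e \<cdot>\<^sub>m R h"
    and R': "R' \<in> op_alg" "\<forall>h\<in>{0<..1}. Q h = h powi e' \<cdot>\<^sub>m R' h"
    using assms unfolding scaled_alg_def by blast
  obtain R'' where R'': "R'' \<in> op_alg" "\<forall>h\<in>{0<..1}. commutator (R h) (R' h) = h powi 1 \<cdot>\<^sub>m R'' h"
    using op_alg_commutator[OF R(1) R'(1)] unfolding scaled_alg_def by blast
  show ?thesis
    unfolding scaled_alg_def
  proof (intro bexI ballI)
    fix h :: real assume h: "h \<in> {0<..1}"
    have "commutator (P h) (Q h) = (h powi e * h powi e') \<cdot>\<^sub>m commutator (R h) (R' h)"
      using R R' h op_alg_carrier[OF R(1), of h] op_alg_carrier[OF R'(1), of h]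
      by (simp add: commutator_smult_left[of _ "Ng h"] commutator_smult_right[of _ "Ng h"]
          smult_carrier_mat smult_smult_mat mult.commute)
    also have "\<dots> = h powi (e + e' + 1) \<cdot>\<^sub>m R'' h"
      using R'' h by (simp add: smult_smult_mat power_int_add)
    finally show "commutator (P h) (Q h) = h powi (e + e' + 1) \<cdot>\<^sub>m R'' h" .
  qed (rule R''(1))
qed

lemma scaled_alg_nested_comm:
  assumes "scaled_alg (-1) X" "scaled_alg (-1) Y" "w \<noteq> []"
  shows "scaled_alg (-1) (\<lambda>h. nested_comm (X h) (Y h) w)"
  using assms(3)
proof (induction w rule: list_nonempty_induct)
  case (single u)
  then show ?case
    using assms(1,2) by (cases u) simp_all
next
  case (cons u w)
  then obtain v us where w: "w = v # us"
    by (cases w) auto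
  have "scaled_alg (-1) (\<lambda>h. if u then X h else Y h)"
    using assms(1,2) by (cases u) simp_all
  from scaled_alg_commutator[OF this cons.IH]
  show ?case
    using w by simp
qed

lemma scaled_alg_iter_comm:
  assumes "scaled_alg (-1) X" "scaled_alg (-1) Y" "\<And>w. w \<in> set ws \<Longrightarrow> w \<noteq> []"
    and "scaled_alg 0 Obs"
  shows "scaled_alg 0 (\<lambda>h. iter_comm (map (nested_comm (X h) (Y h)) ws) (Obs h))"
  using assms(3,4)
proof (induction ws arbitrary: Obs)
  case Nil
  then show ?case
    by (simp add: iter_comm_def)
next
  case (Cons w ws)
  have "scaled_alg (-1 + 0 + 1) (\<lambda>h. commutator (nested_comm (X h) (Y h) w) (Obs h))"
    using Cons.prems by (intro scaled_alg_commutator scaled_alg_nested_comm assms(1,2)) auto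
  then show ?case
    using Cons by (simp add: iter_comm_def)
qed

end

section \<open>Quasi-uniform grids\<close>

lemma DF_eq: "DF N = real N \<cdot>\<^sub>m (cyc_shift N + (-1) \<cdot>\<^sub>m 1\<^sub>m N)"
  by (rule eq_matI) (auto simp: DF_def circM_def cyc_shift_def)

lemma DB_eq: "DB N = real N \<cdot>\<^sub>m (1\<^sub>m N + (-1) \<cdot>\<^sub>m cyc_shift_inv N)"
  by (rule eq_matI) (auto simp: DB_def DF_def circM_def cyc_shift_inv_def)

lemma grid_pt_add_period: "0 < real N \<Longrightarrow> grid_pt a b N (i + N) = grid_pt a b N i + (b - a)"
  unfolding grid_pt_def by (simp add: field_simps)

locale quasi_uniform_grid = grid +
  fixes c1 c2 :: real
  assumes c1_pos: "0 < c1"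
    and Ng_bounds: "\<And>h. h \<in> {0<..1} \<Longrightarrow> c1 / h \<le> real (Ng h) \<and> real (Ng h) \<le> c2 / h"
begin

lemma Ng_pos:
  assumes "h \<in> {0<..1}"
  shows "0 < real (Ng h)"
proof -
  have "0 < c1 / h"
    using assms c1_pos by simp
  also have "\<dots> \<le> real (Ng h)"
    using Ng_bounds[OF assms] by simp
  finally show ?thesis .
qed

lemma bdd_on_unit_h_Ng: "bdd_on_unit (\<lambda>h. h * real (Ng h))"
  unfolding bdd_on_unit_def
proof (intro exI ballI)
  fix h :: real assume h: "h \<in> {0<..1}"
  then have "real (Ng h) * h \<le> c2"
    using Ng_bounds[OF h] by (simp add: le_divide_eq)
  then show "\<bar>h * real (Ng h)\<bar> \<le> c2"
    using h by (simp add: abs_mult mult.commute)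
qed

lemma grid_mesh_le:
  assumes "a \<le> b" "h \<in> {0<..1}"
  shows "(b - a) / real (Ng h) \<le> (b - a) / c1 * h"
proof -
  have "(b - a) / real (Ng h) \<le> (b - a) / (c1 / h)"
    using Ng_bounds[OF assms(2)] assms c1_pos Ng_pos[OF assms(2)] by (intro divide_left_mono) auto
  then show ?thesis
    by simp
qed

lemma grid_sample_in_smooth_grid_funs:
  assumes "a < b" "smooth_fun f" "periodic_fun (b - a) f"
  shows "(\<lambda>h i. f (grid_pt a b (Ng h) i)) \<in> smooth_grid_funs"
proof -
  have "f (grid_pt a b (Ng h) (i + Ng h)) = f (grid_pt a b (Ng h) i)" if "h \<in> {0<..1}" for h i
  proof -
    have "grid_pt a b (Ng h) (i + Ng h) = grid_pt a b (Ng h) i + (b - a)"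
      using Ng_pos[OF that] by (rule grid_pt_add_period)
    then show ?thesis
      using assms(3) unfolding periodic_fun_def by simp
  qed
  moreover have "\<exists>M. \<forall>h\<in>{0<..1}. \<forall>i. \<bar>(seq_diff ^^ k) (\<lambda>i. f (grid_pt a b (Ng h) i)) i\<bar> \<le> M * h ^ k"
    for k
  proof -
    obtain M where M: "\<And>x. \<bar>(deriv ^^ k) f x\<bar> \<le> M"
      using smooth_periodic_higher_deriv_bounded[OF assms(2,3)] assms(1) by auto
    then have "0 \<le> M"
      by (meson abs_ge_zero order_trans)
    have "\<bar>(seq_diff ^^ k) (\<lambda>i. f (grid_pt a b (Ng h) i)) i\<bar> \<le> M * ((b - a) / c1) ^ k * h ^ k"
      if h: "h \<in> {0<..1}" for h i
    proof -
      define d where "d = (b - a) / real (Ng h)"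
      have "0 \<le> d"
        using assms(1) Ng_pos[OF h] unfolding d_def by simp
      have d: "d \<le> (b - a) / c1 * h"
        unfolding d_def using assms(1) h by (intro grid_mesh_le) auto
      have "(\<lambda>i. f (grid_pt a b (Ng h) i)) = (\<lambda>i. f (a + d * real i))"
        unfolding grid_pt_def d_def by simp
      then have "\<bar>(seq_diff ^^ k) (\<lambda>i. f (grid_pt a b (Ng h) i)) i\<bar> = \<bar>(fun_diff d ^^ k) f (a + d * real i)\<bar>"
        by (simp add: seq_diff_iter_sample)
      also have "\<dots> \<le> M * \<bar>d\<bar> ^ k"
        by (rule abs_fun_diff_iter_le[OF assms(2) M])
      also have "\<dots> \<le> M * ((b - a) / c1 * h) ^ k"
        using \<open>0 \<le> M\<close> \<open>0 \<le> d\<close> d by (intro mult_left_mono power_mono) auto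
      also have "\<dots> = M * ((b - a) / c1) ^ k * h ^ k"
        by (simp only: power_mult_distrib mult.assoc)
      finally show ?thesis .
    qed
    then show ?thesis
      by blast
  qed
  ultimately show ?thesis
    unfolding smooth_grid_funs_def by blast
qed

lemma scaled_alg_grid_diag:
  assumes "a < b" "smooth_fun f" "periodic_fun (b - a) f"
  shows "scaled_alg 0 (\<lambda>h. grid_diag a b (Ng h) f)"
  unfolding grid_diag_def by (intro scaled_alg_op_alg op_alg.diag grid_sample_in_smooth_grid_funs[OF assms])

lemma scaled_alg_DF: "scaled_alg (-1) (\<lambda>h. DF (Ng h))"
  unfolding scaled_alg_def
proof (intro bexI ballI)
  show "(\<lambda>h. (h * real (Ng h)) \<cdot>\<^sub>m (cyc_shift (Ng h) + (-1) \<cdot>\<^sub>m 1\<^sub>m (Ng h))) \<in> op_alg"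
    by (intro op_alg.smult op_alg.add op_alg.shift op_alg_one bdd_on_unit_h_Ng bdd_on_unit_const)
  fix h :: real assume "h \<in> {0<..1}"
  then show "DF (Ng h) = h powi -1 \<cdot>\<^sub>m ((h * real (Ng h)) \<cdot>\<^sub>m (cyc_shift (Ng h) + (-1) \<cdot>\<^sub>m 1\<^sub>m (Ng h)))"
    by (simp add: DF_eq smult_smult_mat mult.assoc[symmetric])
qed

lemma scaled_alg_DB: "scaled_alg (-1) (\<lambda>h. DB (Ng h))"
  unfolding scaled_alg_def
proof (intro bexI ballI)
  show "(\<lambda>h. (h * real (Ng h)) \<cdot>\<^sub>m (1\<^sub>m (Ng h) + (-1) \<cdot>\<^sub>m cyc_shift_inv (Ng h))) \<in> op_alg"
    by (intro op_alg.smult op_alg.add op_alg.shift_inv op_alg_one bdd_on_unit_h_Ng bdd_on_unit_const)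
  fix h :: real assume "h \<in> {0<..1}"
  then show "DB (Ng h) = h powi -1 \<cdot>\<^sub>m ((h * real (Ng h)) \<cdot>\<^sub>m (1\<^sub>m (Ng h) + (-1) \<cdot>\<^sub>m cyc_shift_inv (Ng h)))"
    by (simp add: DB_eq smult_smult_mat mult.assoc[symmetric])
qed

lemma scaled_alg_D2: "scaled_alg (-2) (\<lambda>h. D2 (Ng h))"
  using scaled_alg_mult[OF scaled_alg_DB scaled_alg_DF] unfolding D2_def by simp

lemma scaled_alg_Dk: "scaled_alg (- int k) (\<lambda>h. Dk (Ng h) k)"
proof (cases "even k")
  case True
  then obtain j where "k = 2 * j"
    by blast
  then show ?thesis
    using scaled_alg_power[OF scaled_alg_D2, of j] by (simp add: Dk_def mult.commute)
next
  case False
  then obtain j where "k = 2 * j + 1"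
    using oddE by blast
  then show ?thesis
    using scaled_alg_mult[OF scaled_alg_DF scaled_alg_power[OF scaled_alg_D2, of j]]
    by (simp add: Dk_def algebra_simps)
qed

lemma scaled_alg_opA: "scaled_alg (-1) (\<lambda>h. opA (Ng h) h)"
proof -
  have "scaled_alg (-1) (\<lambda>h. (-1) \<cdot>\<^sub>m (h powi 1 \<cdot>\<^sub>m D2 (Ng h)))"
    using scaled_alg_smult[OF _ scaled_alg_smult_powi[OF scaled_alg_D2, of 1]] by simp
  then show ?thesis
    by (rule scaled_alg_cong) (simp add: opA_def smult_smult_mat)
qed

lemma scaled_alg_opB:
  assumes "a < b" "smooth_fun V" "periodic_fun (b - a) V"
  shows "scaled_alg (-1) (\<lambda>h. opB a b (Ng h) h V)"
proof -
  have "scaled_alg (-1) (\<lambda>h. h powi -1 \<cdot>\<^sub>m grid_diag a b (Ng h) V)"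
    using scaled_alg_smult_powi[OF scaled_alg_grid_diag[OF assms], of "-1"] by simp
  then show ?thesis
    by (rule scaled_alg_cong) (simp add: opB_def divide_inverse)
qed

lemma scaled_alg_observable:
  assumes "a < b" "\<And>m. m \<le> q \<Longrightarrow> smooth_fun (y m) \<and> periodic_fun (b - a) (y m)"
  shows "scaled_alg 0 (\<lambda>h. observable a b (Ng h) h q y)"
proof -
  have "scaled_alg 0 (\<lambda>h. foldr (\<lambda>m S. S + h ^ m \<cdot>\<^sub>m (grid_diag a b (Ng h) (y m) * Dk (Ng h) m))
      ms (0\<^sub>m (Ng h) (Ng h)))" if "\<forall>m\<in>set ms. m \<le> q" for ms
    using that
  proof (induction ms)
    case Nil
    then show ?case
      using scaled_alg_zero by simp
  next
    case (Cons m ms)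
    have "scaled_alg (0 + - int m) (\<lambda>h. grid_diag a b (Ng h) (y m) * Dk (Ng h) m)"
      using assms Cons.prems by (intro scaled_alg_mult scaled_alg_grid_diag scaled_alg_Dk) auto
    from scaled_alg_smult_powi[OF this, of "int m"]
    have "scaled_alg 0 (\<lambda>h. h ^ m \<cdot>\<^sub>m (grid_diag a b (Ng h) (y m) * Dk (Ng h) m))"
      by simp
    then show ?case
      using scaled_alg_add[OF Cons.IH] Cons.prems by simp
  qed
  from this[of "[0..<Suc q]"] show ?thesis
    unfolding observable_def by simp
qed

end

theorem theorem4p10:
  fixes a b :: real and V :: "real \<Rightarrow> real" and q :: nat
    and y :: "nat \<Rightarrow> real \<Rightarrow> real"
    and words :: "bool list list"
    and Ngrid :: "real \<Rightarrow> nat"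
  assumes "a < b"
    and "smooth_fun V" and "periodic_fun (b - a) V"
    and "\<And>m. m \<le> q \<Longrightarrow> smooth_fun (y m) \<and> periodic_fun (b - a) (y m)"
    and "words \<noteq> []" and "\<And>w. w \<in> set words \<Longrightarrow> w \<noteq> []"
    and "\<exists>c1 c2. 0 < c1 \<and> 0 < c2 \<and>
           (\<forall>h. 0 < h \<and> h \<le> 1 \<longrightarrow> c1 / h \<le> real (Ngrid h) \<and> real (Ngrid h) \<le> c2 / h)"
  shows "\<exists>C. \<forall>h. 0 < h \<and> h \<le> 1 \<longrightarrow>
           spec_norm (iter_comm
              (map (nested_comm (opA (Ngrid h) h) (opB a b (Ngrid h) h V)) words)
              (observable a b (Ngrid h) h q y)) \<le> C"
proof -
  obtain c1 c2 where "0 < c1"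
    and "\<forall>h. 0 < h \<and> h \<le> 1 \<longrightarrow> c1 / h \<le> real (Ngrid h) \<and> real (Ngrid h) \<le> c2 / h"
    using assms(7) by blast
  then interpret quasi_uniform_grid Ngrid c1 c2
    by unfold_locales auto
  have "scaled_alg 0 (\<lambda>h. iter_comm (map (nested_comm (opA (Ngrid h) h) (opB a b (Ngrid h) h V)) words)
      (observable a b (Ngrid h) h q y))"
    using scaled_alg_opA scaled_alg_opB[OF assms(1-3)] assms(6) scaled_alg_observable[OF assms(1,4)]
    by (rule scaled_alg_iter_comm)
  from scaled_alg_bounded[OF this] show ?thesis
    by (metis greaterThanAtMost_iff)
qed

end
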